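(* Let $B$ be the open unit disk, let $U=(u,v)\in C^1(\overline B;\mathbb R^2)$ be harmonic in $B$, $\Phi=U|_{\partial B}$, $\tilde u$ a harmonic conjugate of $u$ and $f=u+i\tilde u$. Assume $\det DU>0$ on $\partial B$ and that $\frac{\partial u}{\partial\theta}\big|_{\partial B}$ vanishes at only finitely many points. Then $\mathrm{WN}(f(\partial B))=\mathrm{WN}(\Phi(\partial B))$.
   Context: For a closed curve parameterized by a $C^1$ map $\theta\mapsto F(e^{i\theta})$ with $\partial F/\partial\theta\neq0$ for all $\theta$, its winding number is $\mathrm{WN}=\frac1{2\pi}\int_{\partial B}\mathrm d\,\arg\left(\frac{\partial F}{\partial\theta}\right)$. *)

theory Defs
  imports "HOL-Complex_Analysis.Complex_Analysis"
begin

text \<open>Points of the plane are complex numbers z = x + i y.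
  u is C^1 on S with (continuous) partial derivatives ux = du/dx, uy = du/dy
  (derivative taken within S, i.e. one-sided at boundary points of S).\<close>
definition has_partials_on ::
  "(complex \<Rightarrow> real) \<Rightarrow> (complex \<Rightarrow> real) \<Rightarrow> (complex \<Rightarrow> real) \<Rightarrow> complex set \<Rightarrow> bool" where
  "has_partials_on u ux uy S \<longleftrightarrow>
     (\<forall>z\<in>S. (u has_derivative (\<lambda>h. ux z * Re h + uy z * Im h)) (at z within S)) \<and>
     continuous_on S ux \<and> continuous_on S uy"

definition harmonic_on :: "(complex \<Rightarrow> real) \<Rightarrow> complex set \<Rightarrow> bool" where
  "harmonic_on u S \<longleftrightarrow> open S \<and>
     (\<exists>ux uy uxx uxy uyx uyy.
        has_partials_on u ux uy S \<and> has_partials_on ux uxx uxy S \<and> has_partials_on uy uyx uyy S \<and>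
        (\<forall>z\<in>S. uxx z + uyy z = 0))"

text \<open>Angular derivative d/d theta = x d/dy - y d/dx.\<close>
definition dtheta :: "(complex \<Rightarrow> real) \<Rightarrow> (complex \<Rightarrow> real) \<Rightarrow> complex \<Rightarrow> real" where
  "dtheta ux uy z = Re z * uy z - Im z * ux z"

definition regular_closed_curve :: "(real \<Rightarrow> complex) \<Rightarrow> bool" where
  "regular_closed_curve \<gamma> \<longleftrightarrow>
     (\<forall>\<theta>. \<gamma> (\<theta> + 2 * pi) = \<gamma> \<theta>) \<and>
     (\<forall>\<theta>. (\<gamma> has_vector_derivative vector_derivative \<gamma> (at \<theta>)) (at \<theta>)) \<and>
     continuous_on UNIV (\<lambda>\<theta>. vector_derivative \<gamma> (at \<theta>)) \<and>
     (\<forall>\<theta>. vector_derivative \<gamma> (at \<theta>) \<noteq> 0)"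

text \<open>WN = (1/2pi) \<integral> d arg (d gamma / d theta) over theta in [0, 2 pi]:
  the winding number about 0 of the tangent curve.\<close>
definition WN :: "(real \<Rightarrow> complex) \<Rightarrow> complex" where
  "WN \<gamma> = winding_number (\<lambda>t. vector_derivative \<gamma> (at (2 * pi * t))) 0"

end

theory Submission
  imports Defs
begin

text \<open>On the unit circle the tangent of \<open>\<theta> \<mapsto> U(e^{i\<theta>})\<close> is
  \<open>u\<^sub>\<theta> + i v\<^sub>\<theta>\<close>, while the tangent of \<open>\<theta> \<mapsto> f(e^{i\<theta>})\<close> is
  \<open>i z f'(z) = u\<^sub>\<theta> + i u\<^sub>r\<close>, because \<open>f' = u\<^sub>x - i u\<^sub>y\<close> extends continuously
  to the closed disc. The two tangents have the same real part, and where it vanishes the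
  product of their imaginary parts is \<open>u\<^sub>r v\<^sub>\<theta> = det DU > 0\<close>. Hence the segment
  joining them never meets 0, and the linear homotopy between the tangent curves shows
  that their winding numbers agree.\<close>

lemma field_derivative_eq_Re_partials:
  assumes dF: "(F has_field_derivative F') (at z)"
    and dRe: "((\<lambda>w. Re (F w)) has_derivative (\<lambda>h. a * Re h + b * Im h)) (at z)"
  shows "F' = complex_of_real a - \<i> * complex_of_real b"
proof -
  have "((\<lambda>w. Re (F w)) has_derivative (\<lambda>h. Re (F' * h))) (at z)"
    using bounded_linear.has_derivative[OF bounded_linear_Re dF[unfolded has_field_derivative_def]]
    by (simp add: mult.commute)
  then have "(\<lambda>h. Re (F' * h)) = (\<lambda>h. a * Re h + b * Im h)"
    using dRe has_derivative_unique by blast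
  from fun_cong[OF this, of 1] fun_cong[OF this, of \<i>] show ?thesis
    by (simp add: complex_eq_iff)
qed

lemma holomorphic_derivative_from_Re_partials:
  assumes "F holomorphic_on S" "open S" "S \<subseteq> T" "z \<in> S"
    and "has_partials_on (\<lambda>w. Re (F w)) ux uy T"
  shows "(F has_field_derivative complex_of_real (ux z) - \<i> * complex_of_real (uy z)) (at z)"
proof -
  have dF: "(F has_field_derivative deriv F z) (at z)"
    using assms(1,2,4) holomorphic_derivI by blast
  have "((\<lambda>w. Re (F w)) has_derivative (\<lambda>h. ux z * Re h + uy z * Im h)) (at z within T)"
    using assms(3-5) unfolding has_partials_on_def by auto
  then have "((\<lambda>w. Re (F w)) has_derivative (\<lambda>h. ux z * Re h + uy z * Im h)) (at z)"
    using assms(2-4) by (metis at_within_open has_derivative_subset)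
  with dF show ?thesis
    using field_derivative_eq_Re_partials by metis
qed

lemma bounded_derivative_extends_to_closure:
  fixes F :: "complex \<Rightarrow> complex"
  assumes "convex S" "bounded S"
    and dF: "\<And>z. z \<in> S \<Longrightarrow> (F has_field_derivative G z) (at z within S)"
    and G: "continuous_on (closure S) G"
  obtains Fe where "continuous_on (closure S) Fe" "\<And>z. z \<in> S \<Longrightarrow> Fe z = F z"
proof -
  obtain B where B: "\<And>z. z \<in> closure S \<Longrightarrow> norm (G z) \<le> B" "B \<ge> 0"
    using compact_continuous_image[OF G] assms(2) compact_imp_bounded bounded_pos
    by (metis compact_closure image_eqI less_imp_le)
  have "B-lipschitz_on S F"
  proof (rule lipschitz_onI)
    show "dist (F x) (F y) \<le> B * dist x y" if "x \<in> S" "y \<in> S" for x y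
      using field_differentiable_bound[OF assms(1) dF B(1) that] closure_subset
      by (auto simp: dist_norm)
  qed (rule B(2))
  then obtain Fe where "B-lipschitz_on (closure S) Fe" "\<forall>z\<in>S. Fe z = F z"
    using lipschitz_extend_closure by blast
  then show ?thesis
    using that lipschitz_on_continuous_on by blast
qed

lemma Lim_within_eq_continuous_extension:
  assumes "continuous_on (closure S) Fe" "\<And>w. w \<in> S \<Longrightarrow> Fe w = F w" "z islimpt S"
  shows "Lim (at z within S) F = Fe z"
proof (rule tendsto_Lim)
  show "\<not> trivial_limit (at z within S)"
    using assms(3) trivial_limit_within by blast
  have "(Fe \<longlongrightarrow> Fe z) (at z within closure S)"
    using assms(1,3) closure_def continuous_on_def by blast
  then have "(Fe \<longlongrightarrow> Fe z) (at z within S)"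
    by (rule tendsto_within_subset) (rule closure_subset)
  then show "(F \<longlongrightarrow> Fe z) (at z within S)"
    by (rule tendsto_cong[THEN iffD1, rotated])
       (auto simp: eventually_at_filter assms(2) intro: always_eventually)
qed

lemma field_differentiable_bound_linearization:
  fixes S :: "'a::real_normed_field set"
  assumes "convex S"
    and dF: "\<And>w. w \<in> S \<Longrightarrow> (F has_field_derivative G w) (at w within S)"
    and "\<And>w. w \<in> S \<Longrightarrow> norm (G w - c) \<le> e" "x \<in> S" "y \<in> S"
  shows "norm (F x - F y - c * (x - y)) \<le> e * norm (x - y)"
proof -
  have "norm ((F x - c * x) - (F y - c * y)) \<le> e * norm (x - y)"
    by (rule field_differentiable_bound[OF assms(1) _ assms(3-5)])
       (auto intro!: derivative_eq_intros dF)
  then show ?thesis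
    by (simp add: algebra_simps)
qed

lemma radial_limit_cball:
  fixes w :: complex
  assumes "w \<in> cball 0 1"
  shows "((\<lambda>r. of_real r * w) \<longlongrightarrow> w) (at_left 1)"
    and "\<forall>\<^sub>F r in at_left 1. of_real r * w \<in> ball 0 1"
proof -
  show "((\<lambda>r. of_real r * w) \<longlongrightarrow> w) (at_left 1)"
    by (auto intro!: tendsto_eq_intros)
  show "\<forall>\<^sub>F r in at_left 1. of_real r * w \<in> ball 0 1"
    using eventually_at_left_real[OF zero_less_one]
  proof (rule eventually_mono)
    fix r :: real
    assume "r \<in> {0<..<1}"
    then have r: "0 < r" "r < 1"
      by auto
    then have "r * norm w \<le> r"
      using assms by (intro mult_left_le) auto
    moreover have "norm (of_real r * w) = r * norm w"
      using r by (simp add: norm_mult)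
    ultimately have "norm (of_real r * w) < 1"
      using r by linarith
    then show "of_real r * w \<in> ball 0 1"
      by simp
  qed
qed

lemma has_field_derivative_extension_cball:
  fixes F Fe G :: "complex \<Rightarrow> complex"
  assumes dF: "\<And>w. w \<in> ball 0 1 \<Longrightarrow> (F has_field_derivative G w) (at w)"
    and G: "continuous_on (cball 0 1) G"
    and Fe: "continuous_on (cball 0 1) Fe" "\<And>w. w \<in> ball 0 1 \<Longrightarrow> Fe w = F w"
    and z: "z \<in> cball 0 1"
  shows "(Fe has_field_derivative G z) (at z within cball 0 1)"
  unfolding has_field_derivative_def has_derivative_within_alt
proof (intro conjI allI impI)
  show "bounded_linear ((*) (G z))"
    by (rule bounded_linear_mult_right)
  fix e :: real
  assume "e > 0"
  then have "\<exists>d>0. \<forall>w\<in>cball 0 1. dist w z < d \<longrightarrow> dist (G w) (G z) < e"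
    using G z unfolding continuous_on_iff by blast
  then obtain d where "d > 0"
    and dG: "\<And>w. w \<in> cball 0 1 \<Longrightarrow> dist w z < d \<Longrightarrow> dist (G w) (G z) < e"
    by blast
  define S where "S = ball 0 1 \<inter> ball z d"
  have linearization: "norm (F x - F x' - G z * (x - x')) \<le> e * norm (x - x')"
    if "x \<in> S" "x' \<in> S" for x x'
  proof (rule field_differentiable_bound_linearization[OF _ _ _ that])
    show "convex S"
      unfolding S_def by (simp add: convex_Int)
    show "(F has_field_derivative G w) (at w within S)" if "w \<in> S" for w
      using dF that by (simp add: S_def has_field_derivative_at_within)
    show "norm (G w - G z) \<le> e" if "w \<in> S" for w
      using dG[of w] that by (auto simp: S_def dist_norm norm_minus_commute)
  qed
  have Fe_radial: "((\<lambda>r. Fe (of_real r * w)) \<longlongrightarrow> Fe w) (at_left 1)" if "w \<in> cball 0 1" for w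
    using radial_limit_cball(2)[OF that]
    by (intro continuous_on_tendsto_compose[OF Fe(1) radial_limit_cball(1)[OF that] that])
       (auto elim: eventually_mono)
  show "\<exists>d>0. \<forall>y\<in>cball 0 1. norm (y - z) < d \<longrightarrow> norm (Fe y - Fe z - G z * (y - z)) \<le> e * norm (y - z)"
  proof (intro exI[of _ d] conjI ballI impI \<open>d > 0\<close>)
    fix y
    assume y: "y \<in> cball 0 1" "norm (y - z) < d"
    txt \<open>Pass to the limit \<open>r \<rightarrow> 1\<close> in the linearization bound at the interior points
      \<open>r y\<close> and \<open>r z\<close>.\<close>
    define ry rz where "ry r = of_real r * y" and "rz r = of_real r * z" for r :: real
    have "((\<lambda>r. Fe (ry r) - Fe (rz r) - G z * (ry r - rz r)) \<longlongrightarrow> Fe y - Fe z - G z * (y - z)) (at_left 1)"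
      unfolding ry_def rz_def by (intro tendsto_intros Fe_radial radial_limit_cball y(1) z)
    moreover have "\<forall>\<^sub>F r in at_left 1. Fe (ry r) - Fe (rz r) - G z * (ry r - rz r)
        = F (ry r) - F (rz r) - G z * (ry r - rz r)"
      using radial_limit_cball(2)[OF y(1)] radial_limit_cball(2)[OF z]
      by eventually_elim (simp add: Fe(2) ry_def rz_def)
    ultimately have lim: "((\<lambda>r. F (ry r) - F (rz r) - G z * (ry r - rz r)) \<longlongrightarrow> Fe y - Fe z - G z * (y - z)) (at_left 1)"
      by (rule Lim_transform_eventually)
    have dist_radial: "((\<lambda>r. norm (of_real r * w - z)) \<longlongrightarrow> norm (w - z)) (at_left 1)"
      if "w \<in> cball 0 1" for w
      by (intro tendsto_norm tendsto_diff tendsto_const radial_limit_cball that)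
    have "\<forall>\<^sub>F r in at_left 1. norm (ry r - z) < d"
      unfolding ry_def using order_tendstoD(2)[OF dist_radial[OF y(1)] y(2)] .
    moreover have "\<forall>\<^sub>F r in at_left 1. norm (rz r - z) < d"
      unfolding rz_def using order_tendstoD(2)[OF dist_radial[OF z]] \<open>d > 0\<close> by simp
    ultimately have "\<forall>\<^sub>F r in at_left 1. norm (F (ry r) - F (rz r) - G z * (ry r - rz r)) \<le> e * norm (y - z)"
      using radial_limit_cball(2)[OF y(1)] radial_limit_cball(2)[OF z] eventually_at_left_real[OF zero_less_one]
      unfolding ry_def rz_def
    proof eventually_elim
      case (elim r)
      then have "norm (F (of_real r * y) - F (of_real r * z) - G z * (of_real r * y - of_real r * z))
          \<le> e * norm (of_real r * y - of_real r * z)"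
        by (intro linearization) (auto simp: S_def dist_norm norm_minus_commute)
      also have "\<dots> = e * (r * norm (y - z))"
        using elim by (simp add: norm_mult flip: right_diff_distrib)
      also have "\<dots> \<le> e * norm (y - z)"
        using elim \<open>e > 0\<close> by (intro mult_left_mono mult_left_le_one_le) auto
      finally show ?case .
    qed
    then show "norm (Fe y - Fe z - G z * (y - z)) \<le> e * norm (y - z)"
      by (rule tendsto_le[OF trivial_limit_at_left_real tendsto_const tendsto_norm[OF lim]])
  qed
qed

lemma has_vector_derivative_cis_comp:
  assumes "(g has_field_derivative g') (at (cis \<theta>) within S)" "sphere 0 1 \<subseteq> S"
  shows "((\<lambda>\<theta>. g (cis \<theta>)) has_vector_derivative \<i> * cis \<theta> * g') (at \<theta>)"
proof -
  have "(cis has_vector_derivative \<i> * cis \<theta>) (at \<theta>)"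
    using has_derivative_cis[OF has_derivative_ident, of \<theta> UNIV]
    by (simp add: has_vector_derivative_def)
  moreover have "(g has_field_derivative g') (at (cis \<theta>) within range cis)"
    by (rule has_field_derivative_subset[OF assms(1)]) (use assms(2) in auto)
  ultimately show ?thesis
    using field_vector_diff_chain_within[of cis _ \<theta> UNIV g] by (simp add: o_def)
qed

lemma has_real_derivative_dtheta:
  assumes "has_partials_on u ux uy S" "sphere 0 1 \<subseteq> S"
  shows "((\<lambda>\<theta>. u (cis \<theta>)) has_real_derivative dtheta ux uy (cis \<theta>)) (at \<theta>)"
proof -
  have dcis: "(cis has_derivative (\<lambda>t. t *\<^sub>R (\<i> * cis \<theta>))) (at \<theta>)"
    using has_derivative_cis[OF has_derivative_ident, of \<theta> UNIV] by simp
  have du: "\<And>z. z \<in> S \<Longrightarrow> (u has_derivative (\<lambda>h. ux z * Re h + uy z * Im h)) (at z within S)"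
    using assms(1) unfolding has_partials_on_def by blast
  have range_cis: "range cis \<subseteq> S"
    using assms(2) by auto
  have "((\<lambda>\<theta>. u (cis \<theta>)) has_derivative
      (\<lambda>t. ux (cis \<theta>) * Re (t *\<^sub>R (\<i> * cis \<theta>)) + uy (cis \<theta>) * Im (t *\<^sub>R (\<i> * cis \<theta>)))) (at \<theta>)"
    by (rule has_derivative_in_compose2[OF du range_cis UNIV_I dcis])
  moreover have "(\<lambda>t. ux (cis \<theta>) * Re (t *\<^sub>R (\<i> * cis \<theta>)) + uy (cis \<theta>) * Im (t *\<^sub>R (\<i> * cis \<theta>)))
      = (*) (dtheta ux uy (cis \<theta>))"
    by (rule ext) (simp add: dtheta_def algebra_simps)
  ultimately show ?thesis
    unfolding has_field_derivative_def by simp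
qed

lemma has_vector_derivative_dtheta:
  assumes "has_partials_on (\<lambda>z. Re (U z)) ux uy S" "has_partials_on (\<lambda>z. Im (U z)) vx vy S"
    and "sphere 0 1 \<subseteq> S"
  shows "((\<lambda>\<theta>. U (cis \<theta>)) has_vector_derivative
      complex_of_real (dtheta ux uy (cis \<theta>)) + \<i> * complex_of_real (dtheta vx vy (cis \<theta>))) (at \<theta>)"
proof -
  have "((\<lambda>\<theta>. complex_of_real (Re (U (cis \<theta>))) + \<i> * complex_of_real (Im (U (cis \<theta>)))) has_vector_derivative
      complex_of_real (dtheta ux uy (cis \<theta>)) + \<i> * complex_of_real (dtheta vx vy (cis \<theta>))) (at \<theta>)"
    using assms
    by (intro has_vector_derivative_add has_vector_derivative_mult_right has_vector_derivative_of_real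
        has_real_derivative_dtheta)
  moreover have "(\<lambda>\<theta>. complex_of_real (Re (U (cis \<theta>))) + \<i> * complex_of_real (Im (U (cis \<theta>))))
      = (\<lambda>\<theta>. U (cis \<theta>))"
    by (rule ext) (simp add: complex_eq_iff)
  ultimately show ?thesis
    by simp
qed

lemma regular_closed_curve_on_circle:
  assumes dg: "\<And>\<theta>. ((\<lambda>\<theta>. g (cis \<theta>)) has_vector_derivative T (cis \<theta>)) (at \<theta>)"
    and T: "continuous_on (sphere 0 1) T" "\<And>z. z \<in> sphere 0 1 \<Longrightarrow> T z \<noteq> 0"
  shows "regular_closed_curve (\<lambda>\<theta>. g (cis \<theta>))"
    and "WN (\<lambda>\<theta>. g (cis \<theta>)) = winding_number (\<lambda>t. T (cis (2 * pi * t))) 0"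
proof -
  have vd: "vector_derivative (\<lambda>\<theta>. g (cis \<theta>)) (at \<theta>) = T (cis \<theta>)" for \<theta>
    using dg vector_derivative_at by blast
  have "continuous_on UNIV (\<lambda>\<theta>. T (cis \<theta>))"
    by (rule continuous_on_compose2[OF T(1)]) (auto intro: continuous_intros)
  moreover have "cis (\<theta> + 2 * pi) = cis \<theta>" for \<theta>
    by (simp add: cis_mult[symmetric])
  ultimately show "regular_closed_curve (\<lambda>\<theta>. g (cis \<theta>))"
    unfolding regular_closed_curve_def vd using dg T(2) by simp
  show "WN (\<lambda>\<theta>. g (cis \<theta>)) = winding_number (\<lambda>t. T (cis (2 * pi * t))) 0"
    unfolding WN_def vd ..
qed

lemma convex_combination_nonzero_same_sign:
  fixes a b s :: real
  assumes "a * b > 0" "0 \<le> s" "s \<le> 1"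
  shows "(1 - s) * a + s * b \<noteq> 0"
  using assms by (smt (verit) mult_eq_0_iff zero_le_mult_iff)

lemma winding_number_eq_if_Re_eq:
  fixes p q :: "real \<Rightarrow> complex"
  assumes "path p" "path q" "pathfinish p = pathstart p" "pathfinish q = pathstart q"
    and Re_eq: "\<And>t. t \<in> {0..1} \<Longrightarrow> Re (p t) = Re (q t)"
    and Im_sign: "\<And>t. t \<in> {0..1} \<Longrightarrow> Re (p t) = 0 \<Longrightarrow> Im (p t) * Im (q t) > 0"
  shows "winding_number p 0 = winding_number q 0"
proof (intro winding_number_homotopic_loops homotopic_loops_linear assms(1-4) subsetI)
  fix t x
  assume t: "t \<in> {0..1}" and "x \<in> closed_segment (p t) (q t)"
  then obtain s where s: "0 \<le> s" "s \<le> 1" "x = (1 - s) *\<^sub>R p t + s *\<^sub>R q t"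
    unfolding in_segment by blast
  have "Re x = Re (p t)"
    unfolding s(3) using Re_eq[OF t] by (simp add: algebra_simps)
  moreover have "Im x = (1 - s) * Im (p t) + s * Im (q t)"
    using s(3) by simp
  ultimately show "x \<in> - {0}"
    using convex_combination_nonzero_same_sign[OF Im_sign[OF t] s(1,2)] by force
qed

lemma path_circle_image:
  assumes "continuous_on (sphere 0 1) T"
  shows "path (\<lambda>t. T (cis (2 * pi * t)))" "pathfinish (\<lambda>t. T (cis (2 * pi * t))) = pathstart (\<lambda>t. T (cis (2 * pi * t)))"
proof -
  show "path (\<lambda>t. T (cis (2 * pi * t)))"
    unfolding path_def by (rule continuous_on_compose2[OF assms]) (auto intro: continuous_intros)
  show "pathfinish (\<lambda>t. T (cis (2 * pi * t))) = pathstart (\<lambda>t. T (cis (2 * pi * t)))"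
    by (simp add: pathfinish_def pathstart_def)
qed

lemma radial_times_angular_eq_jacobian:
  assumes "norm z = 1" "dtheta ux uy z = 0"
  shows "(Re z * ux z + Im z * uy z) * dtheta vx vy z = ux z * vy z - uy z * vx z"
proof -
  have "Re z ^ 2 + Im z ^ 2 = 1"
    using assms(1) cmod_power2[of z] by simp
  with assms(2) show ?thesis
    unfolding dtheta_def by algebra
qed

theorem lemma3p11:
  fixes U :: "complex \<Rightarrow> complex"
    and ux uy vx vy :: "complex \<Rightarrow> real"
    and ut :: "complex \<Rightarrow> real"
  assumes C1u: "has_partials_on (\<lambda>z. Re (U z)) ux uy (cball 0 1)"
    and C1v: "has_partials_on (\<lambda>z. Im (U z)) vx vy (cball 0 1)"
    and harm_u: "harmonic_on (\<lambda>z. Re (U z)) (ball 0 1)"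
    and harm_v: "harmonic_on (\<lambda>z. Im (U z)) (ball 0 1)"
    and conj: "(\<lambda>z. complex_of_real (Re (U z)) + \<i> * complex_of_real (ut z)) holomorphic_on ball 0 1"
    and det_pos: "\<forall>z. norm z = 1 \<longrightarrow> ux z * vy z - uy z * vx z > 0"
    and fin: "finite {z. norm z = 1 \<and> dtheta ux uy z = 0}"
  shows "regular_closed_curve (\<lambda>\<theta>. U (cis \<theta>)) \<and>
         regular_closed_curve (\<lambda>\<theta>. Lim (at (cis \<theta>) within ball 0 1)
             (\<lambda>z. complex_of_real (Re (U z)) + \<i> * complex_of_real (ut z))) \<and>
         WN (\<lambda>\<theta>. Lim (at (cis \<theta>) within ball 0 1)
             (\<lambda>z. complex_of_real (Re (U z)) + \<i> * complex_of_real (ut z)))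
         = WN (\<lambda>\<theta>. U (cis \<theta>))"
proof -
  define f where "f = (\<lambda>z. complex_of_real (Re (U z)) + \<i> * complex_of_real (ut z))"
  define G where "G z = complex_of_real (ux z) - \<i> * complex_of_real (uy z)" for z
  have df: "(f has_field_derivative G w) (at w)" if "w \<in> ball 0 1" for w
    using holomorphic_derivative_from_Re_partials[OF conj[folded f_def] open_ball _ that, of "cball 0 1"] C1u
    by (simp add: f_def G_def)
  have contG: "continuous_on (cball 0 1) G"
    using C1u unfolding G_def has_partials_on_def by (intro continuous_intros) auto
  obtain fe where fe: "continuous_on (cball 0 1) fe" "\<And>w. w \<in> ball 0 1 \<Longrightarrow> fe w = f w"
    using bounded_derivative_extends_to_closure[of "ball 0 1" f G] df contG
    by (auto simp: has_field_derivative_at_within)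
  have boundary_values: "(\<lambda>\<theta>. Lim (at (cis \<theta>) within ball 0 1) f) = (\<lambda>\<theta>. fe (cis \<theta>))"
    using Lim_within_eq_continuous_extension[of "ball 0 1" fe f] fe by (simp add: islimpt_ball)
  define T1 where "T1 z = complex_of_real (dtheta ux uy z) + \<i> * complex_of_real (dtheta vx vy z)" for z
  define T2 where "T2 z = \<i> * z * G z" for z
  have dU: "((\<lambda>\<theta>. U (cis \<theta>)) has_vector_derivative T1 (cis \<theta>)) (at \<theta>)" for \<theta>
    unfolding T1_def using has_vector_derivative_dtheta[OF C1u C1v] by auto
  have dfe: "((\<lambda>\<theta>. fe (cis \<theta>)) has_vector_derivative T2 (cis \<theta>)) (at \<theta>)" for \<theta>
    unfolding T2_def
    by (rule has_vector_derivative_cis_comp[OF has_field_derivative_extension_cball[OF df contG fe]]) auto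
  have contT: "continuous_on (sphere 0 1) T1" "continuous_on (sphere 0 1) T2"
    using C1u C1v contG sphere_cball[of 0 1] unfolding T1_def T2_def dtheta_def has_partials_on_def
    by (auto intro!: continuous_intros elim: continuous_on_subset)
  have tangents: "Re (T1 z) = Re (T2 z)" "Re (T1 z) = 0 \<Longrightarrow> Im (T1 z) * Im (T2 z) > 0"
    if "z \<in> sphere 0 1" for z
    using that det_pos radial_times_angular_eq_jacobian[of z ux uy vx vy]
    by (auto simp: T1_def T2_def G_def dtheta_def algebra_simps)
  then have nonzero: "T1 z \<noteq> 0" "T2 z \<noteq> 0" if "z \<in> sphere 0 1" for z
    using that by fastforce+
  have "winding_number (\<lambda>t. T1 (cis (2 * pi * t))) 0 = winding_number (\<lambda>t. T2 (cis (2 * pi * t))) 0"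
    by (rule winding_number_eq_if_Re_eq) (use path_circle_image[OF contT(1)] path_circle_image[OF contT(2)] tangents in auto)
  then show ?thesis
    unfolding f_def[symmetric] boundary_values
    using regular_closed_curve_on_circle[OF dU contT(1)] regular_closed_curve_on_circle[OF dfe contT(2)] nonzero
    by auto
qed

end
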